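(* Let $A=(A_1,A_2,A_3)\in V_3$ satisfy $\sigma_{12}(A)=\sigma_{13}(A)=\sigma_{23}(A)=0$ and suppose $A$ is not similar to an upper triangular $3$-matrix. Then $A$ is similar to a triple of the form $A_1'=\begin{pmatrix}a_1&0\\0&d_1\end{pmatrix}$, $A_2'=\begin{pmatrix}a_2&b_2\\0&d_2\end{pmatrix}$, $A_3'=\begin{pmatrix}a_3&0\\c_3&d_3\end{pmatrix}$ with $e_2e_3+b_2c_3=0$ and $e_1b_2c_3\neq 0$, where $e_j=a_j-d_j$.
   Context: $V_3=(M_{2\times2}(\mathbb{C}))^{\times 3}$ with $GL(2,\mathbb{C})$ acting by simultaneous conjugation; two elements are similar if they lie in the same orbit. A $3$-matrix is upper triangular if all components are upper triangular. With $t_j=\mathsf{tr}(A_j)$, $t_{jk}=\mathsf{tr}(A_jA_k)$, define $\tau_{jk}=t_{jk}-\tfrac12t_jt_k$ and $\sigma_{jk}=\tau_{jk}^2-\tau_{jj}\tau_{kk}$. *)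

theory Defs
  imports "HOL-Analysis.Analysis"
begin

type_synonym cmat2 = "complex^2^2"

definition mat2 :: "complex \<Rightarrow> complex \<Rightarrow> complex \<Rightarrow> complex \<Rightarrow> cmat2" where
  "mat2 a b c d = (\<chi> i j. if i = 1 then (if j = 1 then a else b) else (if j = 1 then c else d))"

definition tau :: "cmat2 \<Rightarrow> cmat2 \<Rightarrow> complex" where
  "tau X Y = trace (X ** Y) - trace X * trace Y / 2"

definition sigma :: "cmat2 \<Rightarrow> cmat2 \<Rightarrow> complex" where
  "sigma X Y = (tau X Y)^2 - tau X X * tau Y Y"

definition similar3 :: "cmat2 \<times> cmat2 \<times> cmat2 \<Rightarrow> cmat2 \<times> cmat2 \<times> cmat2 \<Rightarrow> bool" where
  "similar3 A B \<longleftrightarrow> (\<exists>P :: cmat2. invertible P \<and>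
      fst B = P ** fst A ** matrix_inv P \<and>
      fst (snd B) = P ** fst (snd A) ** matrix_inv P \<and>
      snd (snd B) = P ** snd (snd A) ** matrix_inv P)"

definition upper_tri :: "cmat2 \<Rightarrow> bool" where
  "upper_tri X \<longleftrightarrow> X $ 2 $ 1 = 0"

definition upper_tri3 :: "cmat2 \<times> cmat2 \<times> cmat2 \<Rightarrow> bool" where
  "upper_tri3 A \<longleftrightarrow> upper_tri (fst A) \<and> upper_tri (fst (snd A)) \<and> upper_tri (snd (snd A))"

end

theory Submission
  imports Defs
begin

text \<open>Conjugating by a matrix with bottom row v makes X upper triangular exactly when v is a
  left eigenvector of X, so a triple is triangularizable iff its members share a left eigenvector.
  For upper triangular X, sigma(X, Y) is the lower-left entry of Y times a quadratic expression;
  from this, sigma(X, Y) = 0 forces X and Y to share a left eigenvector.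

  Triangularize A1.  If A1 has a single eigenvalue, then either it is scalar and the common
  eigenvector of A2 and A3 serves all three, or sigma(A1, A_j) = 0 makes every A_j upper
  triangular; both contradict the hypothesis.  So A1 can be diagonalized with distinct eigenvalues.
  Now sigma(A1, A_j) = 0 says that each A_j is upper or lower triangular, non-triangularizability
  forces one of each kind (A2 upper and A3 lower, after swapping the basis vectors), and
  sigma(A2, A3) = 0 becomes e2 e3 + b2 c3 = 0.\<close>

lemma cmat2_eq_mat2: "X = mat2 (X$1$1) (X$1$2) (X$2$1) (X$2$2)"
  unfolding mat2_def by (simp add: vec_eq_iff forall_2)

lemma mat2_nth [simp]:
  "mat2 a b c d $ 1 $ 1 = a" "mat2 a b c d $ 1 $ 2 = b"
  "mat2 a b c d $ 2 $ 1 = c" "mat2 a b c d $ 2 $ 2 = d"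
  unfolding mat2_def by simp_all

lemma mat2_eq_iff: "mat2 a b c d = mat2 a' b' c' d' \<longleftrightarrow> a = a' \<and> b = b' \<and> c = c' \<and> d = d'"
  by (metis mat2_nth)

lemma mat2_mult_mat2:
  "mat2 a b c d ** mat2 a' b' c' d' =
     mat2 (a*a' + b*c') (a*b' + b*d') (c*a' + d*c') (c*b' + d*d')"
  by (simp add: vec_eq_iff forall_2 matrix_matrix_mult_def sum_2 mat2_def)

lemma trace_mat2: "trace (mat2 a b c d) = a + d"
  by (simp add: trace_def sum_2)

lemma invertible_mat2: "invertible (mat2 a b c d) \<longleftrightarrow> a*d - b*c \<noteq> 0"
  by (simp add: invertible_det_nz det_2)

lemma
  fixes A :: "'a::semiring_1^'n^'m"
  assumes "invertible A"
  shows matrix_inv_right: "A ** matrix_inv A = mat 1"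
    and matrix_inv_left: "matrix_inv A ** A = mat 1"
  using someI_ex[OF assms[unfolded invertible_def]] by (simp_all add: matrix_inv_def)

lemma conjugate_eq_iff:
  fixes P X Y :: "'a::semiring_1^'n^'n"
  assumes "invertible P"
  shows "P ** X ** matrix_inv P = Y \<longleftrightarrow> P ** X = Y ** P"
  by (metis assms matrix_inv_left matrix_inv_right matrix_mul_assoc matrix_mul_rid)

lemma conjugate_conjugate:
  fixes P Q X :: "'a::semiring_1^'n^'n"
  assumes "invertible P" "invertible Q"
  shows "Q ** (P ** X ** matrix_inv P) ** matrix_inv Q = (Q ** P) ** X ** matrix_inv (Q ** P)"
  by (metis assms conjugate_eq_iff invertible_mult matrix_inv_left matrix_mul_assoc matrix_mul_rid)

lemma tau_conjugate:
  assumes "invertible P"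
  shows "tau (P ** X ** matrix_inv P) (P ** Y ** matrix_inv P) = tau X Y"
proof -
  have trace_conjugate: "trace (P ** Z ** matrix_inv P) = trace Z" for Z :: cmat2
    by (metis assms matrix_inv_left matrix_mul_assoc matrix_mul_rid trace_mul_sym)
  have "P ** X ** matrix_inv P ** (P ** Y ** matrix_inv P) = P ** (X ** Y) ** matrix_inv P"
    by (metis assms matrix_inv_left matrix_mul_assoc matrix_mul_rid)
  then show ?thesis
    unfolding tau_def using trace_conjugate by simp
qed

lemma sigma_conjugate:
  "invertible P \<Longrightarrow> sigma (P ** X ** matrix_inv P) (P ** Y ** matrix_inv P) = sigma X Y"
  unfolding sigma_def by (simp add: tau_conjugate)

lemma tau_mat2:
  "tau (mat2 p q r s) (mat2 p' q' r' s') = p * p' + q * r' + r * q' + s * s' - (p + s) * (p' + s') / 2"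
  unfolding tau_def by (simp add: mat2_mult_mat2 trace_mat2)

lemma sigma_upper_mat2:
  "sigma (mat2 x y 0 z) (mat2 p q r s) = r * ((x - z) * (p - s) * y + y^2 * r - (x - z)^2 * q)"
  unfolding sigma_def tau_mat2 by algebra

lemma similar3_conjugate:
  "invertible P \<Longrightarrow>
    similar3 (A1, A2, A3) (P ** A1 ** matrix_inv P, P ** A2 ** matrix_inv P, P ** A3 ** matrix_inv P)"
  unfolding similar3_def by auto

lemma similar3_refl: "similar3 A A"
proof -
  have inv: "invertible (mat 1 :: cmat2)"
    unfolding invertible_def by (metis matrix_mul_lid)
  have "mat 1 ** X ** matrix_inv (mat 1) = X" for X :: cmat2
    unfolding conjugate_eq_iff[OF inv] by simp
  with inv show ?thesis
    unfolding similar3_def by metis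
qed

lemma similar3_trans:
  assumes "similar3 A B" "similar3 B C"
  shows "similar3 A C"
proof -
  obtain P where "invertible P" "fst B = P ** fst A ** matrix_inv P"
    "fst (snd B) = P ** fst (snd A) ** matrix_inv P" "snd (snd B) = P ** snd (snd A) ** matrix_inv P"
    using assms(1) unfolding similar3_def by blast
  moreover obtain Q where "invertible Q" "fst C = Q ** fst B ** matrix_inv Q"
    "fst (snd C) = Q ** fst (snd B) ** matrix_inv Q" "snd (snd C) = Q ** snd (snd B) ** matrix_inv Q"
    using assms(2) unfolding similar3_def by blast
  ultimately show ?thesis
    unfolding similar3_def by (intro exI[of _ "Q ** P"]) (simp add: invertible_mult conjugate_conjugate)
qed

definition triangularizable3 :: "cmat2 \<times> cmat2 \<times> cmat2 \<Rightarrow> bool" where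
  "triangularizable3 A \<longleftrightarrow> (\<exists>B. similar3 A B \<and> upper_tri3 B)"

definition sigmas_vanish :: "cmat2 \<times> cmat2 \<times> cmat2 \<Rightarrow> bool" where
  "sigmas_vanish A \<longleftrightarrow>
    (case A of (A1, A2, A3) \<Rightarrow> sigma A1 A2 = 0 \<and> sigma A1 A3 = 0 \<and> sigma A2 A3 = 0)"

definition normal_form3 :: "cmat2 \<times> cmat2 \<times> cmat2 \<Rightarrow> bool" where
  "normal_form3 A \<longleftrightarrow> (\<exists>a1 d1 a2 b2 d2 a3 c3 d3.
      A = (mat2 a1 0 0 d1, mat2 a2 b2 0 d2, mat2 a3 0 c3 d3) \<and>
      (a2 - d2) * (a3 - d3) + b2 * c3 = 0 \<and> (a1 - d1) * b2 * c3 \<noteq> 0)"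

lemma triangularizable3_similar:
  "similar3 A B \<Longrightarrow> triangularizable3 B \<Longrightarrow> triangularizable3 A"
  unfolding triangularizable3_def by (metis similar3_trans)

lemma sigmas_vanish_similar:
  assumes "similar3 A B" "sigmas_vanish A"
  shows "sigmas_vanish B"
proof -
  obtain A1 A2 A3 B1 B2 B3 where "A = (A1, A2, A3)" "B = (B1, B2, B3)"
    by (metis prod.collapse)
  with assms show ?thesis
    unfolding similar3_def sigmas_vanish_def by (auto simp: sigma_conjugate)
qed

text \<open>The row vector (c, d) X = (c X11 + d X21, c X12 + d X22) is parallel to (c, d).\<close>
definition left_eigvec :: "cmat2 \<Rightarrow> complex \<Rightarrow> complex \<Rightarrow> bool" where
  "left_eigvec X c d \<longleftrightarrow>
    (c, d) \<noteq> (0, 0) \<and> c * (c * X$1$2 + d * X$2$2) = d * (c * X$1$1 + d * X$2$1)"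

lemma left_eigvec_mat2:
  "left_eigvec (mat2 p q r s) c d \<longleftrightarrow> (c, d) \<noteq> (0, 0) \<and> c * (c * q + d * s) = d * (c * p + d * r)"
  unfolding left_eigvec_def by simp

lemma left_eigvec_exists: "\<exists>c d. left_eigvec X c d"
proof (cases "X$1$2 = 0")
  case True
  then show ?thesis
    unfolding left_eigvec_def by (intro exI[of _ 1] exI[of _ 0]) simp
next
  case False
  define e where "e = X$1$1 - X$2$2"
  define w where "w = csqrt (e^2 + 4 * X$1$2 * X$2$1)"
  define c where "c = (e + w) / (2 * X$1$2)"
  have "w^2 = e^2 + 4 * X$1$2 * X$2$1"
    unfolding w_def by simp
  then have "X$1$2 * c^2 - e * c - X$2$1 = 0"
    using False unfolding c_def by (simp add: field_simps power2_eq_square)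
  then have "left_eigvec X c 1"
    unfolding left_eigvec_def e_def by (simp add: algebra_simps power2_eq_square)
  then show ?thesis by blast
qed

lemma row_extends_to_invertible:
  assumes "(c, d) \<noteq> (0, 0)"
  shows "\<exists>a b. invertible (mat2 a b c d)"
proof (cases "d = 0")
  case True
  with assms show ?thesis
    unfolding invertible_mat2 by (intro exI[of _ 0] exI[of _ 1]) simp
next
  case False
  then show ?thesis
    unfolding invertible_mat2 by (intro exI[of _ 1] exI[of _ 0]) simp
qed

lemma conjugate_mat2_lower_left:
  assumes "invertible (mat2 a b c d)"
  shows "(mat2 a b c d ** X ** matrix_inv (mat2 a b c d))$2$1 * (a*d - b*c) =
    d * (c * X$1$1 + d * X$2$1) - c * (c * X$1$2 + d * X$2$2)"
proof -
  let ?P = "mat2 a b c d"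
  obtain p q r s where X: "X = mat2 p q r s"
    using cmat2_eq_mat2 by blast
  obtain y11 y12 y21 y22 where Y: "?P ** mat2 p q r s ** matrix_inv ?P = mat2 y11 y12 y21 y22"
    using cmat2_eq_mat2 by blast
  then have "?P ** mat2 p q r s = mat2 y11 y12 y21 y22 ** ?P"
    by (simp add: conjugate_eq_iff[OF assms])
  then have "y21 * a + y22 * c = c * p + d * r" "y21 * b + y22 * d = c * q + d * s"
    by (simp_all add: mat2_mult_mat2 mat2_eq_iff)
  then show ?thesis
    unfolding X Y by simp algebra
qed

lemma upper_tri_conjugate_iff:
  assumes "invertible (mat2 a b c d)"
  shows "upper_tri (mat2 a b c d ** X ** matrix_inv (mat2 a b c d)) \<longleftrightarrow> left_eigvec X c d"
proof -
  have "a*d - b*c \<noteq> 0" "(c, d) \<noteq> (0, 0)"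
    using assms by (auto simp: invertible_mat2)
  then show ?thesis
    using conjugate_mat2_lower_left[OF assms, of X]
    unfolding upper_tri_def left_eigvec_def by auto
qed

text \<open>If (u, v) is a left eigenvector of P X P^-1, complete it to an invertible Q;
  then Q P triangularizes X, so the bottom row (u, v) P of Q P is a left eigenvector of X.\<close>
lemma left_eigvec_conjugate:
  assumes P: "invertible (mat2 a b c d)"
    and "left_eigvec (mat2 a b c d ** X ** matrix_inv (mat2 a b c d)) u v"
  shows "left_eigvec X (u * a + v * c) (u * b + v * d)"
proof -
  let ?P = "mat2 a b c d"
  obtain a' b' where Q: "invertible (mat2 a' b' u v)"
    using assms(2) row_extends_to_invertible unfolding left_eigvec_def by blast
  let ?QP = "mat2 (a' * a + b' * c) (a' * b + b' * d) (u * a + v * c) (u * b + v * d)"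
  have QP: "mat2 a' b' u v ** ?P = ?QP"
    by (simp add: mat2_mult_mat2)
  have "upper_tri (mat2 a' b' u v ** (?P ** X ** matrix_inv ?P) ** matrix_inv (mat2 a' b' u v))"
    using assms(2) by (simp add: upper_tri_conjugate_iff[OF Q])
  then have "upper_tri (?QP ** X ** matrix_inv ?QP)"
    by (simp add: conjugate_conjugate[OF P Q] QP)
  moreover have "invertible ?QP"
    using invertible_mult[OF Q P] QP by simp
  ultimately show ?thesis
    using upper_tri_conjugate_iff by blast
qed

lemma triangularizable3_if_common_left_eigvec:
  assumes "left_eigvec A1 c d" "left_eigvec A2 c d" "left_eigvec A3 c d"
  shows "triangularizable3 (A1, A2, A3)"
proof -
  obtain a b where P: "invertible (mat2 a b c d)"
    using assms(1) row_extends_to_invertible unfolding left_eigvec_def by blast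
  let ?C = "\<lambda>X. mat2 a b c d ** X ** matrix_inv (mat2 a b c d)"
  have "similar3 (A1, A2, A3) (?C A1, ?C A2, ?C A3)" "upper_tri3 (?C A1, ?C A2, ?C A3)"
    using similar3_conjugate[OF P] assms by (auto simp: upper_tri3_def upper_tri_conjugate_iff[OF P])
  then show ?thesis
    unfolding triangularizable3_def by blast
qed

lemma similar3_upper_first: "\<exists>p q s B2 B3. similar3 (A1, A2, A3) (mat2 p q 0 s, B2, B3)"
proof -
  obtain c d where "left_eigvec A1 c d"
    using left_eigvec_exists by blast
  moreover obtain a b where P: "invertible (mat2 a b c d)"
    using calculation row_extends_to_invertible unfolding left_eigvec_def by blast
  ultimately have "upper_tri (mat2 a b c d ** A1 ** matrix_inv (mat2 a b c d))"
    by (simp add: upper_tri_conjugate_iff)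
  then show ?thesis
    using similar3_conjugate[OF P] unfolding upper_tri_def by (metis cmat2_eq_mat2)
qed

lemma common_left_eigvec_upper:
  assumes "sigma (mat2 x y 0 z) Y = 0"
  shows "\<exists>c d. left_eigvec (mat2 x y 0 z) c d \<and> left_eigvec Y c d"
proof -
  obtain p q r s where Y: "Y = mat2 p q r s"
    using cmat2_eq_mat2 by blast
  consider "r = 0" | "(x - z) * (p - s) * y + y^2 * r - (x - z)^2 * q = 0"
    using assms by (auto simp: Y sigma_upper_mat2)
  then show ?thesis
  proof cases
    case 1
    then show ?thesis
      by (intro exI[of _ 0] exI[of _ 1]) (simp add: Y left_eigvec_mat2)
  next
    case 2
    show ?thesis
    proof (cases "x = z \<and> y = 0")
      case True
      obtain c d where "left_eigvec Y c d"
        using left_eigvec_exists by blast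
      with True show ?thesis
        by (auto simp: left_eigvec_def)
    next
      case False
      \<comment> \<open>(x - z, y) is a left eigenvector of the upper triangular matrix for the eigenvalue x\<close>
      with 2 show ?thesis
        by (intro exI[of _ "x - z"] exI[of _ y]) (auto simp: Y left_eigvec_mat2 power2_eq_square algebra_simps)
    qed
  qed
qed

lemma common_left_eigvec_if_sigma_eq_0:
  assumes "sigma X Y = 0"
  shows "\<exists>c d. left_eigvec X c d \<and> left_eigvec Y c d"
proof -
  obtain c d where "left_eigvec X c d"
    using left_eigvec_exists by blast
  moreover obtain a b where P: "invertible (mat2 a b c d)"
    using calculation row_extends_to_invertible unfolding left_eigvec_def by blast
  let ?C = "\<lambda>X. mat2 a b c d ** X ** matrix_inv (mat2 a b c d)"
  have "upper_tri (?C X)"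
    using calculation by (simp add: upper_tri_conjugate_iff[OF P])
  then obtain x y z where X': "?C X = mat2 x y 0 z"
    unfolding upper_tri_def by (metis cmat2_eq_mat2)
  have "sigma (mat2 x y 0 z) (?C Y) = 0"
    using assms sigma_conjugate[OF P, of X Y] by (simp add: X')
  then obtain u v where "left_eigvec (?C X) u v" "left_eigvec (?C Y) u v"
    using common_left_eigvec_upper X' by metis
  then show ?thesis
    using left_eigvec_conjugate[OF P] by blast
qed

lemma triangularizable3_if_repeated_eigenvalue:
  assumes "sigmas_vanish (mat2 p q 0 p, A2, A3)"
  shows "triangularizable3 (mat2 p q 0 p, A2, A3)"
proof (cases "q = 0")
  case True
  have "sigma A2 A3 = 0"
    using assms by (simp add: sigmas_vanish_def)
  then obtain c d where "left_eigvec A2 c d" "left_eigvec A3 c d"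
    using common_left_eigvec_if_sigma_eq_0 by blast
  moreover from calculation have "left_eigvec (mat2 p q 0 p) c d"
    using True by (simp add: left_eigvec_def)
  ultimately show ?thesis
    by (simp add: triangularizable3_if_common_left_eigvec)
next
  case False
  obtain p2 q2 r2 s2 p3 q3 r3 s3 where A: "A2 = mat2 p2 q2 r2 s2" "A3 = mat2 p3 q3 r3 s3"
    using cmat2_eq_mat2 by metis
  have "r2 = 0" "r3 = 0"
    using assms False by (simp_all add: sigmas_vanish_def sigma_upper_mat2 A)
  then show ?thesis
    by (intro triangularizable3_if_common_left_eigvec[of _ 0 1]) (simp_all add: left_eigvec_mat2 A)
qed

lemma similar3_diag_first:
  assumes "p \<noteq> s"
  shows "\<exists>C2 C3. similar3 (mat2 p q 0 s, B2, B3) (mat2 p 0 0 s, C2, C3)"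
proof -
  define t where "t = q / (p - s)"
  have P: "invertible (mat2 1 t 0 1)"
    by (simp add: invertible_mat2)
  have "mat2 1 t 0 1 ** mat2 p q 0 s ** matrix_inv (mat2 1 t 0 1) = mat2 p 0 0 s"
    using assms unfolding conjugate_eq_iff[OF P]
    by (simp add: mat2_mult_mat2 mat2_eq_iff t_def field_simps)
  then show ?thesis
    using similar3_conjugate[OF P] by metis
qed

lemma normal_form3_mat2:
  assumes "p \<noteq> s" "q2 \<noteq> 0" "r3 \<noteq> 0" "sigma (mat2 p2 q2 0 s2) (mat2 p3 0 r3 s3) = 0"
  shows "normal_form3 (mat2 p 0 0 s, mat2 p2 q2 0 s2, mat2 p3 0 r3 s3)"
proof -
  have "r3 * q2 * ((p2 - s2) * (p3 - s3) + q2 * r3) = 0"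
    using assms(4) unfolding sigma_upper_mat2 by (simp add: power2_eq_square algebra_simps)
  then show ?thesis
    using assms(1-3) by (auto simp: normal_form3_def mat2_eq_iff)
qed

lemma similar3_normal_form3_if_diag_first:
  assumes "p \<noteq> s" and sigmas: "sigmas_vanish (mat2 p 0 0 s, A2, A3)"
    and not_tri: "\<not> triangularizable3 (mat2 p 0 0 s, A2, A3)"
  shows "\<exists>B. similar3 (mat2 p 0 0 s, A2, A3) B \<and> normal_form3 B"
proof -
  obtain p2 q2 r2 s2 p3 q3 r3 s3 where A: "A2 = mat2 p2 q2 r2 s2" "A3 = mat2 p3 q3 r3 s3"
    using cmat2_eq_mat2 by metis
  have "q2 * r2 = 0" "q3 * r3 = 0"
    using assms(1) sigmas by (auto simp: sigmas_vanish_def sigma_upper_mat2 A)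
  moreover have "r2 \<noteq> 0 \<or> r3 \<noteq> 0" "q2 \<noteq> 0 \<or> q3 \<noteq> 0"
    using not_tri triangularizable3_if_common_left_eigvec[of _ 0 1]
      triangularizable3_if_common_left_eigvec[of _ 1 0]
    by (auto simp: left_eigvec_mat2 A)
  ultimately consider "q2 \<noteq> 0" "r3 \<noteq> 0" "r2 = 0" "q3 = 0" | "r2 \<noteq> 0" "q3 \<noteq> 0" "q2 = 0" "r3 = 0"
    by auto
  then show ?thesis
  proof cases
    case 1
    then have "normal_form3 (mat2 p 0 0 s, A2, A3)"
      using assms(1) sigmas by (simp add: normal_form3_mat2 sigmas_vanish_def A)
    then show ?thesis
      using similar3_refl by blast
  next
    case 2
    let ?J = "mat2 0 1 1 0"
    have J: "invertible ?J"
      by (simp add: invertible_mat2)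
    have swap: "?J ** mat2 a b c d ** matrix_inv ?J = mat2 d c b a" for a b c d
      unfolding conjugate_eq_iff[OF J] by (simp add: mat2_mult_mat2)
    let ?B = "(mat2 s 0 0 p, mat2 s2 r2 0 p2, mat2 s3 0 q3 p3)"
    have sim: "similar3 (mat2 p 0 0 s, A2, A3) ?B"
      using similar3_conjugate[OF J, of "mat2 p 0 0 s" A2 A3] by (simp add: swap A 2)
    then have "sigmas_vanish ?B"
      using sigmas sigmas_vanish_similar by blast
    then have "normal_form3 ?B"
      using assms(1) 2 by (simp add: normal_form3_mat2 sigmas_vanish_def)
    with sim show ?thesis
      by blast
  qed
qed

theorem lemma2p10:
  fixes A1 A2 A3 :: cmat2
  assumes "sigma A1 A2 = 0" and "sigma A1 A3 = 0" and "sigma A2 A3 = 0"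
    and "\<not> (\<exists>B. similar3 (A1, A2, A3) B \<and> upper_tri3 B)"
  shows "\<exists>a1 d1 a2 b2 d2 a3 c3 d3 :: complex.
           similar3 (A1, A2, A3) (mat2 a1 0 0 d1, mat2 a2 b2 0 d2, mat2 a3 0 c3 d3) \<and>
           (a2 - d2) * (a3 - d3) + b2 * c3 = 0 \<and>
           (a1 - d1) * b2 * c3 \<noteq> 0"
proof -
  let ?A = "(A1, A2, A3)"
  have A: "sigmas_vanish ?A" "\<not> triangularizable3 ?A"
    using assms by (simp_all add: sigmas_vanish_def triangularizable3_def)
  obtain p q s B2 B3 where AB: "similar3 ?A (mat2 p q 0 s, B2, B3)"
    using similar3_upper_first by blast
  then have B: "sigmas_vanish (mat2 p q 0 s, B2, B3)" "\<not> triangularizable3 (mat2 p q 0 s, B2, B3)"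
    using A sigmas_vanish_similar triangularizable3_similar by blast+
  then have "p \<noteq> s"
    using triangularizable3_if_repeated_eigenvalue by blast
  then obtain C2 C3 where BC: "similar3 (mat2 p q 0 s, B2, B3) (mat2 p 0 0 s, C2, C3)"
    using similar3_diag_first by blast
  then have "sigmas_vanish (mat2 p 0 0 s, C2, C3)" "\<not> triangularizable3 (mat2 p 0 0 s, C2, C3)"
    using B sigmas_vanish_similar triangularizable3_similar by blast+
  then obtain D where "similar3 (mat2 p 0 0 s, C2, C3) D" "normal_form3 D"
    using similar3_normal_form3_if_diag_first \<open>p \<noteq> s\<close> by blast
  then have "similar3 ?A D" "normal_form3 D"
    using AB BC similar3_trans by blast+
  then show ?thesis
    unfolding normal_form3_def by blast
qed

end
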